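(* Let $u_n=(-1)^{s_2(n)}$, where $s_2(n)$ is the sum of the binary digits of $n$. Then \[\prod_{n=0}^\infty\left(\frac{(4n+3)(2n+2)}{(4n+5)(2n+3)}\right)^{u_n}=\frac{1}{\sqrt 2}.\]
   Context: $(u_n)_{n\ge0}$ is the Thue–Morse sequence with values $\pm1$: $u_n=1$ if the binary expansion of $n$ has an even number of $1$'s and $u_n=-1$ otherwise. Infinite products are the limits of their partial products. *)

theory Defs
  imports "HOL-Analysis.Analysis"
begin

fun s2 :: "nat \<Rightarrow> nat" where
  "s2 n = (if n = 0 then 0 else n mod 2 + s2 (n div 2))"

declare s2.simps[simp del]

definition tm :: "nat \<Rightarrow> int" where
  "tm n = (-1) ^ s2 n"

end

theory Submission
  imports Defs "HOL-Real_Asymp.Real_Asymp"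
begin

text \<open>
  Write \<open>L c = \<Sum>n. u(n) ln ((4n+c)/(4n+c+2))\<close>; taking logarithms, the product converges to
  \<open>exp (L 3 + L 4)\<close>. These series converge because Thue--Morse weighted sums of monotone null
  sequences converge: since \<open>u(2n) = u(n)\<close> and \<open>u(2n+1) = -u(n)\<close>, grouping consecutive terms gives a
  weighted sum of absolutely summable differences. The same grouping, together with
  \<open>ln (2x) = ln 2 + ln x\<close>, yields \<open>L (2c) = L c - L (c + 1)\<close>. For \<open>c = 0\<close> the term \<open>n = 0\<close>
  contributes an extra \<open>-ln 2\<close>, which forces \<open>L 1 = -ln 2\<close>; hence
  \<open>L 3 + L 4 = L 2 = L 1 / 2 = -ln 2 / 2\<close>.
\<close>

lemma tm_0 [simp]: "tm 0 = 1"
  by (simp add: tm_def s2.simps)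

lemma tm_double [simp]: "tm (2 * n) = tm n"
  by (cases "n = 0") (simp_all add: tm_def s2.simps[of "2 * n"])

lemma tm_Suc_double [simp]: "tm (Suc (2 * n)) = - tm n"
  by (simp add: tm_def s2.simps[of "Suc (2 * n)"])

lemma abs_of_int_tm [simp]: "\<bar>of_int (tm n) :: 'a::linordered_idom\<bar> = 1"
  by (simp add: tm_def)

lemma sum_tm_double:
  fixes f :: "nat \<Rightarrow> 'a::comm_ring_1"
  shows "(\<Sum>n<2 * K. of_int (tm n) * f n) = (\<Sum>n<K. of_int (tm n) * (f (2 * n) - f (Suc (2 * n))))"
  by (induction K) (auto simp: ring_distribs)

lemma sums_tm_pairs_iff:
  fixes f :: "nat \<Rightarrow> 'a::real_normed_field"
  assumes "f \<longlonglongrightarrow> 0"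
  shows "(\<lambda>n. of_int (tm n) * f n) sums s \<longleftrightarrow> (\<lambda>n. of_int (tm n) * (f (2 * n) - f (Suc (2 * n)))) sums s"
    (is "?f sums s \<longleftrightarrow> ?g sums s")
proof
  assume "?f sums s"
  then have "(\<lambda>K. \<Sum>n<2 * K. ?f n) \<longlonglongrightarrow> s"
    unfolding sums_def by (rule LIMSEQ_subseq_LIMSEQ[unfolded o_def]) (simp add: strict_mono_def)
  then show "?g sums s"
    by (simp add: sums_def sum_tm_double)
next
  assume "?g sums s"
  then have even: "(\<lambda>N. \<Sum>n<2 * (N div 2). ?f n) \<longlonglongrightarrow> s"
    unfolding sums_def sum_tm_double
    by (rule filterlim_compose) (rule filterlim_at_top_div_const_nat, simp)
  define r where "r N = (if odd N then ?f (2 * (N div 2)) else 0)" for N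
  have split: "(\<lambda>N. \<Sum>n<N. ?f n) = (\<lambda>N. (\<Sum>n<2 * (N div 2). ?f n) + r N)"
  proof (rule ext)
    fix N
    show "(\<Sum>n<N. ?f n) = (\<Sum>n<2 * (N div 2). ?f n) + r N"
    proof (cases "even N")
      case False
      then obtain k where "N = Suc (2 * k)"
        by (metis oddE Suc_eq_plus1)
      then show ?thesis
        by (simp add: r_def)
    qed (simp add: r_def)
  qed
  have "filterlim (\<lambda>N. 2 * (N div 2)) sequentially sequentially"
    by (rule filterlim_compose[OF filterlim_subseq filterlim_at_top_div_const_nat])
      (simp_all add: strict_mono_def)
  then have f_even: "(\<lambda>N. f (2 * (N div 2))) \<longlonglongrightarrow> 0"
    by (rule filterlim_compose[OF assms])
  have "r \<longlonglongrightarrow> 0"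
    by (rule Lim_null_comparison[OF _ tendsto_norm_zero[OF f_even]])
      (simp add: r_def norm_mult always_eventually)
  from tendsto_add[OF even this] show "?f sums s"
    unfolding sums_def split by simp
qed

lemma summable_diff_Suc_double_mono:
  fixes f :: "nat \<Rightarrow> real"
  assumes "mono f" and "f \<longlonglongrightarrow> l"
  shows "summable (\<lambda>n. f (Suc (2 * n)) - f (2 * n))"
proof (rule bounded_imp_summable)
  show "0 \<le> f (Suc (2 * n)) - f (2 * n)" for n
    using monoD[OF assms(1)] by simp
  have "(\<Sum>k\<le>n. f (Suc (2 * k)) - f (2 * k)) \<le> f (2 * Suc n) - f 0" for n
  proof (induction n)
    case (Suc n)
    have "f (Suc (2 * Suc n)) - f (2 * Suc n) \<le> f (2 * Suc (Suc n)) - f (2 * Suc n)"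
      using monoD[OF assms(1)] by simp
    with Suc show ?case by simp
  qed (use monoD[OF assms(1)] in simp)
  also have "f (2 * Suc n) \<le> l" for n
    using incseq_le[OF assms] .
  finally show "(\<Sum>k\<le>n. f (Suc (2 * k)) - f (2 * k)) \<le> l - f 0" for n
    by simp
qed

lemma summable_tm_mult:
  fixes f :: "nat \<Rightarrow> real"
  assumes lim: "f \<longlonglongrightarrow> 0" and mono: "\<And>m n. k \<le> m \<Longrightarrow> m \<le> n \<Longrightarrow> f m \<le> f n"
  shows "summable (\<lambda>n. of_int (tm n) * f n)"
proof -
  define g where "g n = f (max k n)" for n
  have g_eq: "eventually (\<lambda>n. g n = f n) sequentially"
    unfolding g_def eventually_sequentially by (auto simp: max_def)
  have "mono g"
    by (auto intro!: monoI mono simp: g_def)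
  moreover have g_lim: "g \<longlonglongrightarrow> 0"
    using tendsto_cong[OF g_eq] lim by simp
  ultimately have pairs: "summable (\<lambda>n. g (Suc (2 * n)) - g (2 * n))"
    by (rule summable_diff_Suc_double_mono)
  have "g (2 * n) \<le> g (Suc (2 * n))" for n
    using \<open>mono g\<close> by (simp add: monoD)
  then have "summable (\<lambda>n. of_int (tm n) * (g (2 * n) - g (Suc (2 * n))))"
    by (intro summable_comparison_test'[OF pairs]) (simp add: abs_mult)
  then have "summable (\<lambda>n. of_int (tm n) * g n)"
    using sums_tm_pairs_iff[OF g_lim] by (auto simp: summable_def)
  moreover have "eventually (\<lambda>n. of_int (tm n) * g n = of_int (tm n) * f n) sequentially"
    using g_eq by eventually_elim simp
  ultimately show ?thesis
    by (simp add: summable_cong)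
qed

definition log_ratio :: "real \<Rightarrow> nat \<Rightarrow> real" where
  "log_ratio c n = ln (4 * real n + c) - ln (4 * real n + c + 2)"

definition tm_log_sum :: "real \<Rightarrow> real" where
  "tm_log_sum c = (\<Sum>n. of_int (tm n) * log_ratio c n)"

lemma ln_diff_add_two_mono:
  fixes x y :: real
  assumes "0 < x" and "x \<le> y"
  shows "ln x - ln (x + 2) \<le> ln y - ln (y + 2)"
proof -
  have "0 < x * (y + 2)" "0 < y * (x + 2)"
    using assms by simp_all
  then have "ln (x * (y + 2)) \<le> ln (y * (x + 2))"
    using assms by (simp add: algebra_simps)
  then show ?thesis
    using assms by (simp add: ln_mult)
qed

lemma log_ratio_mono: "0 < 4 * real m + c \<Longrightarrow> m \<le> n \<Longrightarrow> log_ratio c m \<le> log_ratio c n"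
  unfolding log_ratio_def by (rule ln_diff_add_two_mono) simp_all

lemma log_ratio_tendsto_zero: "(\<lambda>n. log_ratio c n) \<longlonglongrightarrow> 0"
  unfolding log_ratio_def by real_asymp

lemma summable_tm_log_ratio:
  assumes "0 \<le> c"
  shows "summable (\<lambda>n. of_int (tm n) * log_ratio c n)"
  using assms by (intro summable_tm_mult[where k = 1] log_ratio_tendsto_zero log_ratio_mono) simp_all

lemma log_ratio_double:
  assumes "0 < 4 * real n + c"
  shows "log_ratio (2 * c) (2 * n) - log_ratio (2 * c) (Suc (2 * n)) = log_ratio c n - log_ratio (c + 1) n"
proof -
  have ln_double: "ln (2 * x) = ln 2 + ln x" if "0 < x" for x :: real
    using that by (simp add: ln_mult)
  have h: "ln (8 * real n + 2 * c + k) = ln 2 + ln (4 * real n + c + k / 2)" if "0 \<le> k" for k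
    using ln_double[of "4 * real n + c + k / 2"] assms that by (simp add: ring_distribs)
  show ?thesis
    using h[of 0] h[of 2] h[of 4] h[of 6] by (simp add: log_ratio_def algebra_simps)
qed

lemma sums_tm_log_sum:
  assumes "0 \<le> c"
  shows "(\<lambda>n. of_int (tm n) * log_ratio c n) sums tm_log_sum c"
  unfolding tm_log_sum_def using summable_tm_log_ratio[OF assms] by (rule summable_sums)

lemma sums_tm_log_sum_pairs:
  assumes "0 \<le> c"
  shows "(\<lambda>n. of_int (tm n) * (log_ratio c (2 * n) - log_ratio c (Suc (2 * n)))) sums tm_log_sum c"
  using sums_tm_log_sum[OF assms] sums_tm_pairs_iff[OF log_ratio_tendsto_zero] by blast

lemma tm_log_sum_double:
  assumes "0 < c"
  shows "tm_log_sum (2 * c) = tm_log_sum c - tm_log_sum (c + 1)"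
proof -
  have "(\<lambda>n. of_int (tm n) * (log_ratio c n - log_ratio (c + 1) n))
      sums (tm_log_sum c - tm_log_sum (c + 1))"
    using sums_diff[OF sums_tm_log_sum sums_tm_log_sum] assms by (simp add: right_diff_distrib)
  moreover have "(\<lambda>n. of_int (tm n) * (log_ratio c n - log_ratio (c + 1) n)) sums tm_log_sum (2 * c)"
    using sums_tm_log_sum_pairs[of "2 * c"] assms by (simp add: log_ratio_double)
  ultimately show ?thesis
    using sums_unique2 by blast
qed

lemma tm_log_sum_1: "tm_log_sum 1 = - ln 2"
proof -
  \<comment> \<open>\<open>log_ratio 0 0\<close> involves the junk value \<open>ln 0\<close>, but it cancels on both sides.\<close>
  have pairs: "log_ratio 0 (2 * n) - log_ratio 0 (Suc (2 * n))
      = log_ratio 0 n - log_ratio 1 n - (if n = 0 then ln 2 else 0)" for n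
  proof (cases "n = 0")
    case True
    have "ln (6::real) = ln 2 + ln 3" "ln (4::real) = ln 2 + ln 2"
      using ln_mult[of 2 3] ln_mult[of 2 2] by simp_all
    with True show ?thesis
      by (simp add: log_ratio_def)
  qed (use log_ratio_double[of n 0] in simp)
  have tm_ln2: "of_int (tm n) * (if n = 0 then ln 2 else 0) = (if n = 0 then ln 2 else 0)" for n
    by simp
  have "(\<lambda>n. of_int (tm n) * (log_ratio 0 n - log_ratio 1 n) - (if n = 0 then ln 2 else 0))
      sums (tm_log_sum 0 - tm_log_sum 1 - ln 2)"
    using sums_diff[OF sums_diff[OF sums_tm_log_sum sums_tm_log_sum] sums_single[of 0 "\<lambda>_. ln 2"]]
    by (simp add: right_diff_distrib)
  moreover have "(\<lambda>n. of_int (tm n) * (log_ratio 0 n - log_ratio 1 n) - (if n = 0 then ln 2 else 0))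
      sums tm_log_sum 0"
    using sums_tm_log_sum_pairs[of 0] by (simp only: pairs right_diff_distrib tm_ln2)
  ultimately show ?thesis
    using sums_unique2 by fastforce
qed

lemma tendsto_prod_powi_exp:
  fixes x :: "nat \<Rightarrow> real" and e :: "nat \<Rightarrow> int"
  assumes "\<And>n. 0 < x n" and "(\<lambda>n. of_int (e n) * ln (x n)) sums s"
  shows "(\<lambda>N. \<Prod>n<N. x n powi e n) \<longlonglongrightarrow> exp s"
proof -
  have "x n powi e n = exp (of_int (e n) * ln (x n))" for n
    using exp_power_int[of "ln (x n)" "e n"] assms(1) by simp
  then have "(\<Prod>n<N. x n powi e n) = exp (\<Sum>n<N. of_int (e n) * ln (x n))" for N
    by (simp add: exp_sum)
  then show ?thesis
    using assms(2) by (simp add: sums_def tendsto_exp)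
qed

lemma ln_factor_eq_log_ratio:
  "ln ((real (4 * n + 3) * real (2 * n + 2)) / (real (4 * n + 5) * real (2 * n + 3)))
     = log_ratio 3 n + log_ratio 4 n"
proof -
  have "(real (4 * n + 3) * real (2 * n + 2)) / (real (4 * n + 5) * real (2 * n + 3))
      = ((4 * real n + 3) * (4 * real n + 4)) / ((4 * real n + 3 + 2) * (4 * real n + 4 + 2))"
    by (subst frac_eq_eq, simp, simp) (simp add: algebra_simps)
  then show ?thesis
    by (simp add: log_ratio_def ln_div ln_mult add_pos_pos)
qed

theorem mainTheorem3:
  shows "(\<lambda>N. \<Prod>n<N. ((real (4*n+3) * real (2*n+2)) / (real (4*n+5) * real (2*n+3))) powi tm n)
           \<longlonglongrightarrow> 1 / sqrt 2"
proof -
  have "tm_log_sum 2 = - ln 2 / 2"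
    using tm_log_sum_double[of 1] tm_log_sum_1 by simp
  moreover have "tm_log_sum 4 = tm_log_sum 2 - tm_log_sum 3"
    using tm_log_sum_double[of 2] by simp
  ultimately have "(\<lambda>n. of_int (tm n) * (log_ratio 3 n + log_ratio 4 n)) sums (- ln 2 / 2)"
    using sums_add[OF sums_tm_log_sum[of 3] sums_tm_log_sum[of 4]] by (simp add: distrib_left)
  then have "(\<lambda>n. of_int (tm n) * ln ((real (4*n+3) * real (2*n+2)) / (real (4*n+5) * real (2*n+3))))
      sums (- ln 2 / 2)"
    by (simp only: ln_factor_eq_log_ratio)
  then have "(\<lambda>N. \<Prod>n<N. ((real (4*n+3) * real (2*n+2)) / (real (4*n+5) * real (2*n+3))) powi tm n)
      \<longlonglongrightarrow> exp (- ln 2 / 2)"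
    by (rule tendsto_prod_powi_exp[rotated]) simp
  moreover have "exp (- ln 2 / 2) = 1 / sqrt 2"
  proof -
    have "sqrt 2 = exp (ln 2 / 2)"
      using powr_half_sqrt[of 2] by (simp add: powr_def)
    then show ?thesis
      by (simp add: exp_minus inverse_eq_divide)
  qed
  ultimately show ?thesis by simp
qed

end
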